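(* Let $q$ be a prime power and let $\mathcal{C}$ be a $\mathcal{GRS}(n,k,d)$ code over $\mathbb{F}_q$ with $d=n-k+1$, distinct evaluation points $\alpha_0,\dots,\alpha_{n-1}\in\mathbb{F}_q$ and non-zero column multipliers $v_0,\dots,v_{n-1}$. Let $\vec c\in\mathcal{C}$ and $\vec r\in\mathbb{F}_q^n$, let $E=\{i : c_i\neq r_i\}$, $\epsilon=|E|$, and assume $\epsilon>d/2$. Let $\Lambda(x)=\prod_{i\in E}(x-\alpha_i)$. Let $H_1(x),H_2(x)\in\mathbb{F}_q[x]$ be coprime polynomials and $A(x),B(x)\in\mathbb{F}_q[x]$ polynomials such that $$\Lambda(x)=A(x)H_1(x)+B(x)H_2(x),\qquad \deg A=\epsilon-\deg H_1,\qquad \deg B\le \epsilon-d+\deg H_1 .$$ Let $L\le n$, $\tau$ and $\tau_L$ be positive integers, put $w_1=\tau-\deg H_1$ and $w_2=\tau-d+\deg H_1$, assume $w_1,w_2\ge 0$, and for $i=0,\dots,L-1$ let $P_i=(H_2(\alpha_i):-H_1(\alpha_i))\in\mathbb{P}^1_{\mathbb{F}_q}$. Let $s,\ell$ be positive integers and $Q(x,y,z)=\sum_{j=0}^{\ell}Q_j(x)y^jz^{\ell-j}$, $Q_j\in\mathbb{F}_q[x]$, a non-zero polynomial which has a zero of multiplicity at least $s$ at $(\alpha_i,P_i)$ for every $i=0,\dots,L-1$ and satisfies $\deg_{(1,w_1,w_2)}Q<s\tau_L$. Let $\epsilon_L=|E\cap\{0,\dots,L-1\}|$ and suppose $\epsilon\neq\tau$.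 Then $Q(x,A(x),B(x))=0$ provided that $$\frac{\ell}{s}\ge\frac{\tau_L-\epsilon_L}{\tau-\epsilon}\ \text{ when } \tau>\epsilon,\qquad\text{respectively}\qquad \frac{\ell}{s}\le\frac{\epsilon_L-\tau_L}{\epsilon-\tau}\ \text{ when } \tau<\epsilon.$$
   Context: A generalised Reed–Solomon code $\mathcal{GRS}(n,k,d)$ over $\mathbb{F}_q$ is $\{(v_0C(\alpha_0),\dots,v_{n-1}C(\alpha_{n-1})) : C\in\mathbb{F}_q[x],\ \deg C<k\}$. In the paper, $H_1,H_2$ are intermediate polynomials of the Extended Euclidean Algorithm run on $x^{d-1}$ and the syndrome polynomial of $\vec r$, and positions are indexed so that positions $0,\dots,L-1$ are the $L$ least reliable ones; only the stated properties are used. Points of $\mathbb{P}^1_{\mathbb{F}_q}$ are pairs $(a:b)\neq(0:0)$ up to non-zero scalar multiples. The $(1,w_1,w_2)$-weighted degree of $x^uy^jz^h$ is $u+w_1j+w_2h$, and of a polynomial the maximum over its monomials. A homogeneous $Q(x,y,z)$ has a zero of multiplicity at least $s$ at $(\alpha,(a:b))\in\mathbb{F}_q\times\mathbb{P}^1_{\mathbb{F}_q}$ if: when $b\neq0$, the polynomial $Q(x+\alpha,\,y+a/b,\,1)\in\mathbb{F}_q[x,y]$ has no monomial $x^uy^v$ with $u+v<s$; when $b=0$, the polynomial $Q(x+\alpha,1,z)\in\mathbb{F}_q[x,z]$ has no monomial $x^uz^v$ with $u+v<s$. *)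

theory Defs
  imports "HOL-Computational_Algebra.Polynomial"
begin

text \<open>Codewords of GRS(n,k,d): vectors (v_i C(alpha_i))_{i<n} with deg C < k.
  Vectors of length n are functions nat => 'a, only indices < n matter.\<close>
definition grs_code :: "nat \<Rightarrow> nat \<Rightarrow> (nat \<Rightarrow> 'a::field) \<Rightarrow> (nat \<Rightarrow> 'a) \<Rightarrow> (nat \<Rightarrow> 'a) set" where
  "grs_code n k \<alpha> v = {c. \<exists>C. degree C < k \<and> (\<forall>i<n. c i = v i * poly C (\<alpha> i))}"

text \<open>A homogeneous polynomial Q(x,y,z) = sum_{j<=l} Q_j(x) y^j z^(l-j) is represented by
  its coefficient function Qs :: nat => 'a poly (only j <= l used) and l.\<close>

text \<open>Coefficient of x^u y^v in Q(x+alpha, y+beta, 1) = sum_j Q_j(x+alpha) (y+beta)^j.\<close>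
definition coeff_shift_y :: "(nat \<Rightarrow> 'a::field poly) \<Rightarrow> nat \<Rightarrow> 'a \<Rightarrow> 'a \<Rightarrow> nat \<Rightarrow> nat \<Rightarrow> 'a" where
  "coeff_shift_y Qs l \<alpha> \<beta> u v =
     (\<Sum>j\<le>l. if v \<le> j then coeff (pcompose (Qs j) [:\<alpha>, 1:]) u * of_nat (j choose v) * \<beta> ^ (j - v) else 0)"

text \<open>Coefficient of x^u z^v in Q(x+alpha, 1, z) = sum_j Q_j(x+alpha) z^(l-j).\<close>
definition coeff_shift_z :: "(nat \<Rightarrow> 'a::field poly) \<Rightarrow> nat \<Rightarrow> 'a \<Rightarrow> nat \<Rightarrow> nat \<Rightarrow> 'a" where
  "coeff_shift_z Qs l \<alpha> u v = (if v \<le> l then coeff (pcompose (Qs (l - v)) [:\<alpha>, 1:]) u else 0)"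

text \<open>Q has a zero of multiplicity at least s at (alpha, (a:b)).\<close>
definition hom_mult_ge :: "(nat \<Rightarrow> 'a::field poly) \<Rightarrow> nat \<Rightarrow> nat \<Rightarrow> 'a \<Rightarrow> 'a \<Rightarrow> 'a \<Rightarrow> bool" where
  "hom_mult_ge Qs l s \<alpha> a b =
     (if b \<noteq> 0 then (\<forall>u v. u + v < s \<longrightarrow> coeff_shift_y Qs l \<alpha> (a / b) u v = 0)
      else (\<forall>u v. u + v < s \<longrightarrow> coeff_shift_z Qs l \<alpha> u v = 0))"

definition wdeg_less :: "(nat \<Rightarrow> 'a::zero poly) \<Rightarrow> nat \<Rightarrow> int \<Rightarrow> int \<Rightarrow> int \<Rightarrow> bool" where
  "wdeg_less Qs l w1 w2 D =
     (\<forall>j\<le>l. \<forall>u. coeff (Qs j) u \<noteq> 0 \<longrightarrow> int u + w1 * int j + w2 * int (l - j) < D)"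

definition hom_eval :: "(nat \<Rightarrow> 'a::comm_ring_1 poly) \<Rightarrow> nat \<Rightarrow> 'a poly \<Rightarrow> 'a poly \<Rightarrow> 'a poly" where
  "hom_eval Qs l A B = (\<Sum>j\<le>l. Qs j * A ^ j * B ^ (l - j))"

end

theory Submission
  imports Defs
begin

text \<open>Put \<open>F(x) = Q(x, A(x), B(x))\<close>. At an error position \<open>i < L\<close> we have \<open>\<Lambda>(\<alpha>\<^sub>i) = 0\<close>, i.e.
  \<open>A(\<alpha>\<^sub>i) H\<^sub>1(\<alpha>\<^sub>i) + B(\<alpha>\<^sub>i) H\<^sub>2(\<alpha>\<^sub>i) = 0\<close>, so the curve \<open>x \<mapsto> (x, (A(x) : B(x)))\<close> passes
  through the point \<open>(\<alpha>\<^sub>i, P\<^sub>i)\<close> (coprimality makes \<open>P\<^sub>i\<close> a genuine point), and the multiplicity-\<open>s\<close>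
  zero of \<open>Q\<close> there forces \<open>(x - \<alpha>\<^sub>i)\<^sup>s\<close> to divide \<open>F\<close>. Hence \<open>F\<close> has at least \<open>s \<epsilon>\<^sub>L\<close> roots with
  multiplicity. On the other hand \<open>deg A = w\<^sub>1 + (\<epsilon> - \<tau>)\<close> and \<open>deg B \<le> w\<^sub>2 + (\<epsilon> - \<tau>)\<close>, so the weighted
  degree bound gives \<open>deg F < s \<tau>\<^sub>L + \<ell> (\<epsilon> - \<tau>)\<close>, which the condition on \<open>\<ell>/s\<close> makes at most
  \<open>s \<epsilon>\<^sub>L\<close>. So \<open>F = 0\<close>.\<close>

lemma pcompose_power: "pcompose (p ^ n) q = pcompose p q ^ n"
  by (induct n) (simp_all add: pcompose_mult pcompose_1)

lemma monom_1_dvd_power: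
  fixes p :: "'a::field poly"
  assumes "poly p 0 = 0"
  shows "monom 1 n dvd p ^ n"
proof -
  have "monom 1 1 dvd p" using assms by (simp add: monom_1_dvd_iff' poly_0_coeff_0)
  then have "monom 1 1 ^ n dvd p ^ n" by (rule dvd_power_same)
  then show ?thesis by (simp add: monom_power)
qed

lemma linear_power_dvd_of_monom_dvd_pcompose:
  fixes p :: "'a::field poly"
  assumes "monom 1 n dvd pcompose p [:a, 1:]"
  shows "[:-a, 1:] ^ n dvd p"
proof -
  obtain h where h: "pcompose p [:a, 1:] = monom 1 n * h" using assms by (auto elim: dvdE)
  have "p = pcompose p (pcompose [:a, 1:] [:-a, 1:])" by (simp add: pcompose_pCons)
  also have "\<dots> = pcompose (monom 1 n * h) [:-a, 1:]" by (simp add: pcompose_assoc h)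
  also have "\<dots> = [:-a, 1:] ^ n * pcompose h [:-a, 1:]"
    by (simp add: pcompose_mult monom_altdef pcompose_power pcompose_pCons)
  finally show ?thesis by (metis dvd_triv_left)
qed

lemma card_mult_le_degree:
  fixes p :: "'a::field poly"
  assumes "p \<noteq> 0" "finite S" "\<forall>a\<in>S. [:-a, 1:] ^ n dvd p"
  shows "n * card S \<le> degree p"
proof (cases "n = 0")
  case False
  have orders: "n \<le> order a p" if "a \<in> S" for a
    using assms that by (simp add: order_divides)
  then have roots: "S \<subseteq> {a. poly p a = 0}"
    using False assms(1) order_root by fastforce
  have "n * card S = (\<Sum>a\<in>S. n)" by simp
  also have "\<dots> \<le> (\<Sum>a\<in>S. order a p)" using orders by (rule sum_mono)
  also have "\<dots> \<le> (\<Sum>a | poly p a = 0. order a p)"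
    using roots poly_roots_finite[OF assms(1)] by (intro sum_mono2) auto
  also have "\<dots> \<le> degree p" using assms(1) by (rule sum_order_le_degree)
  finally show ?thesis .
qed simp

lemma monom_dvd_hom_eval:
  fixes R :: "nat \<Rightarrow> 'a::field poly"
  assumes Y: "poly Y 0 = 0" and R: "\<forall>v\<le>l. \<forall>u. u + v < s \<longrightarrow> coeff (R v) u = 0"
  shows "monom 1 s dvd hom_eval R l Y Z"
  unfolding hom_eval_def
proof (intro dvd_sum)
  fix v assume v: "v \<in> {..l}"
  have "monom 1 s dvd R v * Y ^ v"
  proof (cases "s \<le> v")
    case True
    have "(monom 1 s :: 'a poly) dvd monom 1 v" using True by (auto simp: monom_1_dvd_iff' coeff_monom)
    also have "\<dots> dvd Y ^ v" using Y by (rule monom_1_dvd_power)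
    finally show ?thesis by simp
  next
    case False
    have "monom 1 (s - v) dvd R v" using R v by (auto simp: monom_1_dvd_iff')
    then have "monom 1 (s - v) * monom 1 v dvd R v * Y ^ v"
      using monom_1_dvd_power[OF Y] by (rule mult_dvd_mono)
    then show ?thesis using False by (simp add: mult_monom)
  qed
  then show "monom 1 s dvd R v * Y ^ v * Z ^ (l - v)" by simp
qed

lemma hom_eval_swap: "hom_eval Q l Y Z = hom_eval (\<lambda>j. Q (l - j)) l Z Y"
  unfolding hom_eval_def
  by (rule sum.reindex_bij_witness[of _ "\<lambda>j. l - j" "\<lambda>j. l - j"]) (auto simp: mult_ac)

lemma hom_eval_pcompose:
  "pcompose (hom_eval Q l Y Z) p = hom_eval (\<lambda>j. pcompose (Q j) p) l (pcompose Y p) (pcompose Z p)"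
  by (simp add: hom_eval_def pcompose_sum pcompose_mult pcompose_power)

text \<open>Coefficients of \<open>Q\<close> re-expanded around \<open>y = \<beta> z\<close>: the \<open>v\<close>-th one is the coefficient of
  \<open>y\<^sup>v\<close> in \<open>Q(x, y + \<beta>, 1)\<close>, cf. \<open>coeff_shift_y\<close>.\<close>

definition binomial_shift :: "(nat \<Rightarrow> 'a::comm_ring_1 poly) \<Rightarrow> nat \<Rightarrow> 'a \<Rightarrow> nat \<Rightarrow> 'a poly" where
  "binomial_shift Q l \<beta> v = (\<Sum>j\<le>l. if v \<le> j then smult (of_nat (j choose v) * \<beta> ^ (j - v)) (Q j) else 0)"

lemma hom_eval_binomial_shift:
  fixes Q :: "nat \<Rightarrow> 'a::comm_ring_1 poly"
  shows "hom_eval Q l Y Z = hom_eval (binomial_shift Q l \<beta>) l (Y - smult \<beta> Z) Z"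
proof -
  define W where "W = Y - smult \<beta> Z"
  define T where "T j v = (if v \<le> j then smult (of_nat (j choose v) * \<beta> ^ (j - v)) (Q j) * W ^ v * Z ^ (l - v) else 0)" for j v
  have expand: "Q j * Y ^ j * Z ^ (l - j) = (\<Sum>v\<le>l. T j v)" if j: "j \<le> l" for j
  proof -
    have "Y ^ j = (\<Sum>v\<le>j. of_nat (j choose v) * W ^ v * smult \<beta> Z ^ (j - v))"
      using binomial_ring[of W "smult \<beta> Z" j] by (simp add: W_def)
    then have "Q j * Y ^ j * Z ^ (l - j) = (\<Sum>v\<le>j. Q j * (of_nat (j choose v) * W ^ v * smult \<beta> Z ^ (j - v)) * Z ^ (l - j))"
      by (simp add: sum_distrib_left sum_distrib_right)
    also have "\<dots> = (\<Sum>v\<le>j. T j v)"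
    proof (rule sum.cong[OF refl])
      fix v assume "v \<in> {..j}"
      then have "Z ^ (j - v) * Z ^ (l - j) = Z ^ (l - v)" using j by (simp flip: power_add)
      then show "Q j * (of_nat (j choose v) * W ^ v * smult \<beta> Z ^ (j - v)) * Z ^ (l - j) = T j v"
        using \<open>v \<in> {..j}\<close> by (simp add: T_def smult_power of_nat_poly mult_ac)
    qed
    also have "\<dots> = (\<Sum>v\<le>l. T j v)"
      using j by (intro sum.mono_neutral_left) (auto simp: T_def)
    finally show ?thesis .
  qed
  have "hom_eval Q l Y Z = (\<Sum>j\<le>l. \<Sum>v\<le>l. T j v)"
    unfolding hom_eval_def using expand by (intro sum.cong) auto
  also have "\<dots> = (\<Sum>v\<le>l. \<Sum>j\<le>l. T j v)" by (rule sum.swap)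
  also have "\<dots> = hom_eval (binomial_shift Q l \<beta>) l W Z"
    by (auto simp: hom_eval_def binomial_shift_def T_def sum_distrib_right intro!: sum.cong)
  finally show ?thesis by (simp add: W_def)
qed

lemma coeff_binomial_shift_pcompose:
  "coeff (binomial_shift (\<lambda>j. pcompose (Q j) [:\<alpha>, 1:]) l \<beta> v) u = coeff_shift_y Q l \<alpha> \<beta> u v"
  unfolding binomial_shift_def coeff_shift_y_def coeff_sum
  by (intro sum.cong) (auto simp: mult_ac)

lemma linear_power_dvd_hom_eval:
  fixes Q :: "nat \<Rightarrow> 'a::field poly"
  assumes mult: "hom_mult_ge Q l s \<alpha> a b" and ab: "a \<noteq> 0 \<or> b \<noteq> 0"
    and on_point: "poly A \<alpha> * b = poly B \<alpha> * a"
  shows "[:-\<alpha>, 1:] ^ s dvd hom_eval Q l A B"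
proof (rule linear_power_dvd_of_monom_dvd_pcompose)
  define Qt where "Qt = (\<lambda>j. pcompose (Q j) [:\<alpha>, 1:])"
  define Y where "Y = pcompose A [:\<alpha>, 1:]"
  define Z where "Z = pcompose B [:\<alpha>, 1:]"
  have Y0: "poly Y 0 = poly A \<alpha>" and Z0: "poly Z 0 = poly B \<alpha>"
    by (simp_all add: Y_def Z_def poly_pcompose)
  have "monom 1 s dvd hom_eval Qt l Y Z"
  proof (cases "b = 0")
    case True
    with ab on_point Z0 have "poly Z 0 = 0" by simp
    moreover have "\<forall>v\<le>l. \<forall>u. u + v < s \<longrightarrow> coeff (Qt (l - v)) u = 0"
      using mult True unfolding hom_mult_ge_def coeff_shift_z_def Qt_def by (metis (full_types))
    ultimately show ?thesis
      by (simp add: hom_eval_swap[of Qt] monom_dvd_hom_eval) \<comment> \<open>the point at infinity: swap \<open>y\<close> and \<open>z\<close>\<close>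
  next
    case False
    with on_point Y0 Z0 have "poly (Y - smult (a / b) Z) 0 = 0" by (simp add: field_simps)
    moreover have "\<forall>v\<le>l. \<forall>u. u + v < s \<longrightarrow> coeff (binomial_shift Qt l (a / b) v) u = 0"
      using mult False by (simp add: hom_mult_ge_def Qt_def coeff_binomial_shift_pcompose)
    ultimately show ?thesis
      by (simp add: hom_eval_binomial_shift[of Qt l Y Z "a / b"] monom_dvd_hom_eval)
  qed
  then show "monom 1 s dvd pcompose (hom_eval Q l A B) [:\<alpha>, 1:]"
    by (simp add: hom_eval_pcompose Qt_def Y_def Z_def)
qed

lemma degree_hom_eval_less:
  fixes Q :: "nat \<Rightarrow> 'a::field poly" and w1 w2 e D :: int
  assumes wdeg: "wdeg_less Q l w1 w2 D"
    and A: "int (degree A) \<le> w1 + e" and B: "B = 0 \<or> int (degree B) \<le> w2 + e"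
    and nz: "hom_eval Q l A B \<noteq> 0"
  shows "int (degree (hom_eval Q l A B)) < D + int l * e"
proof -
  define F where "F = hom_eval Q l A B"
  have "(\<Sum>j\<le>l. coeff (Q j * A ^ j * B ^ (l - j)) (degree F)) \<noteq> 0"
    using nz by (simp add: F_def hom_eval_def coeff_sum[symmetric])
  then obtain j where j: "j \<le> l" and cj: "coeff (Q j * A ^ j * B ^ (l - j)) (degree F) \<noteq> 0"
    by (meson atMost_iff sum.neutral)
  then have Qj: "coeff (Q j) (degree (Q j)) \<noteq> 0" and Bj: "B \<noteq> 0 \<or> l - j = 0"
    by (auto simp: power_0_left split: if_splits)
  have "degree F \<le> degree (Q j * A ^ j * B ^ (l - j))" using cj by (rule le_degree)
  also have "\<dots> \<le> degree (Q j) + degree A * j + degree B * (l - j)"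
    by (meson add_le_mono degree_mult_le degree_power_le le_trans order_refl)
  finally have "int (degree F) \<le> int (degree (Q j)) + int (degree A) * int j + int (degree B) * int (l - j)"
    by (metis of_nat_add of_nat_le_iff of_nat_mult)
  moreover have "int (degree A) * int j \<le> (w1 + e) * int j" using A by (simp add: mult_right_mono)
  moreover have "int (degree B) * int (l - j) \<le> (w2 + e) * int (l - j)"
    using B Bj by (auto intro: mult_right_mono)
  moreover have "int (degree (Q j)) + w1 * int j + w2 * int (l - j) < D"
    using wdeg j Qj unfolding wdeg_less_def by blast
  moreover have "int j + int (l - j) = int l" using j by simp
  ultimately show ?thesis unfolding F_def by (simp add: algebra_simps)
qed

lemma list_size_condition_int:
  fixes s l \<tau> \<tau>L \<epsilon> \<epsilon>L :: nat
  assumes "0 < s" "\<epsilon> \<noteq> \<tau>"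
    and gt: "\<tau> > \<epsilon> \<Longrightarrow> real l / real s \<ge> (real \<tau>L - real \<epsilon>L) / (real \<tau> - real \<epsilon>)"
    and lt: "\<tau> < \<epsilon> \<Longrightarrow> real l / real s \<le> (real \<epsilon>L - real \<tau>L) / (real \<epsilon> - real \<tau>)"
  shows "int s * int \<tau>L + int l * (int \<epsilon> - int \<tau>) \<le> int s * int \<epsilon>L"
proof -
  have "real s * real \<tau>L + real l * (real \<epsilon> - real \<tau>) \<le> real s * real \<epsilon>L"
  proof (cases "\<tau> > \<epsilon>")
    case True
    with gt \<open>0 < s\<close> show ?thesis by (simp add: field_simps)
  next
    case False
    with lt \<open>0 < s\<close> \<open>\<epsilon> \<noteq> \<tau>\<close> show ?thesis by (simp add: field_simps)
  qed
  then have "real_of_int (int s * int \<tau>L + int l * (int \<epsilon> - int \<tau>)) \<le> real_of_int (int s * int \<epsilon>L)"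
    by simp
  then show ?thesis by (simp only: of_int_le_iff)
qed

theorem lemma1:
  fixes \<alpha> v c r :: "nat \<Rightarrow> 'a::{finite, field}"
    and n k d L \<tau> \<tau>L s l :: nat
    and H1 H2 A B :: "'a poly"
    and Qs :: "nat \<Rightarrow> 'a poly"
  assumes k: "1 \<le> k" "k \<le> n"
    and d: "d = n - k + 1"
    and dist: "inj_on \<alpha> {..<n}"
    and v: "\<forall>i<n. v i \<noteq> 0"
    and c: "c \<in> grs_code n k \<alpha> v"
  defines "E \<equiv> {i. i < n \<and> c i \<noteq> r i}"
  defines "\<epsilon> \<equiv> card E"
  defines "\<Lambda> \<equiv> (\<Prod>i\<in>E. [:- \<alpha> i, 1:])"
  assumes eps: "2 * \<epsilon> > d"
    and cop: "coprime H1 H2"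
    and key: "\<Lambda> = A * H1 + B * H2"
    and degA: "A \<noteq> 0" "int (degree A) = int \<epsilon> - int (degree H1)"
    and degB: "B = 0 \<or> int (degree B) \<le> int \<epsilon> - int d + int (degree H1)"
    and L: "L \<le> n" and tau: "0 < \<tau>" "0 < \<tau>L"
  defines "w1 \<equiv> int \<tau> - int (degree H1)"
  defines "w2 \<equiv> int \<tau> - int d + int (degree H1)"
  assumes w: "w1 \<ge> 0" "w2 \<ge> 0"
    and sl: "0 < s" "0 < l"
    and Qnz: "\<exists>j\<le>l. Qs j \<noteq> 0"
    and mult: "\<forall>i<L. hom_mult_ge Qs l s (\<alpha> i) (poly H2 (\<alpha> i)) (- poly H1 (\<alpha> i))"
    and wdeg: "wdeg_less Qs l w1 w2 (int s * int \<tau>L)"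
  defines "\<epsilon>L \<equiv> card (E \<inter> {..<L})"
  assumes ne: "\<epsilon> \<noteq> \<tau>"
    and cond_gt: "\<tau> > \<epsilon> \<Longrightarrow> real l / real s \<ge> (real \<tau>L - real \<epsilon>L) / (real \<tau> - real \<epsilon>)"
    and cond_lt: "\<tau> < \<epsilon> \<Longrightarrow> real l / real s \<le> (real \<epsilon>L - real \<tau>L) / (real \<epsilon> - real \<tau>)"
  shows "hom_eval Qs l A B = 0"
proof (rule ccontr)
  assume F: "hom_eval Qs l A B \<noteq> 0"
  have finE: "finite E" by (simp add: E_def)
  have "[:-a, 1:] ^ s dvd hom_eval Qs l A B" if a_err: "a \<in> \<alpha> ` (E \<inter> {..<L})" for a
  proof -
    obtain i where i: "i \<in> E" "i < L" and a: "a = \<alpha> i" using a_err by blast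
    have "poly \<Lambda> a = 0" using i a finE by (auto simp: \<Lambda>_def poly_prod)
    then have on_point: "poly A a * - poly H1 a = poly B a * poly H2 a"
      using key by (simp add: add_eq_0_iff)
    have "poly H2 a \<noteq> 0 \<or> - poly H1 a \<noteq> 0" using coprime_poly_0[OF cop] by auto
    moreover have "hom_mult_ge Qs l s a (poly H2 a) (- poly H1 a)" using mult i a by blast
    ultimately show ?thesis using on_point by (intro linear_power_dvd_hom_eval)
  qed
  then have "s * card (\<alpha> ` (E \<inter> {..<L})) \<le> degree (hom_eval Qs l A B)"
    using F finE by (intro card_mult_le_degree) auto
  moreover have "card (\<alpha> ` (E \<inter> {..<L})) = \<epsilon>L"
    unfolding \<epsilon>L_def by (rule card_image, rule inj_on_subset[OF dist]) (auto simp: E_def)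
  moreover have "int (degree (hom_eval Qs l A B)) < int s * int \<tau>L + int l * (int \<epsilon> - int \<tau>)"
    using wdeg degA degB F unfolding w1_def w2_def
    by (intro degree_hom_eval_less) auto
  moreover have "int s * int \<tau>L + int l * (int \<epsilon> - int \<tau>) \<le> int s * int \<epsilon>L"
    using sl(1) ne cond_gt cond_lt by (rule list_size_condition_int)
  ultimately show False by (metis not_le of_nat_le_iff of_nat_mult order.strict_trans2)
qed

end
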